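(* Let $G=(V,E,w)$ be a weighted digraph and $W=\sum_{e\in E}w(e)$. Then $\chi_w(G)\le 2\lfloor\sqrt{2W}\rfloor+1$.
   Context: A weighted digraph is $G=(V,E,w)$ with $w:E\to[0,1]$. A $k$-coloring is a map $c:V\to\{1,\dots,k\}$, and $c[v]$ denotes the set of vertices with color $c(v)$. For $S\subseteq V$, $d^-_S(v)=\sum_{u\in S,(u,v)\in E}w(u,v)$. A weighted improper $k$-coloring is a $k$-coloring with $d^-_{c[v]}(v)<1$ for every $v$; $\chi_w(G)$ is the minimum $k$ for which one exists. *)

theory Defs
  imports Complex_Main
begin

definition weighted_digraph :: "'a set \<Rightarrow> ('a \<times> 'a) set \<Rightarrow> ('a \<times> 'a \<Rightarrow> real) \<Rightarrow> bool" where
  "weighted_digraph V E w \<longleftrightarrow> finite V \<and> E \<subseteq> V \<times> V \<and> (\<forall>(u,v)\<in>E. u \<noteq> v)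
     \<and> (\<forall>e\<in>E. 0 \<le> w e \<and> w e \<le> 1)"

definition in_deg :: "('a \<times> 'a) set \<Rightarrow> ('a \<times> 'a \<Rightarrow> real) \<Rightarrow> 'a set \<Rightarrow> 'a \<Rightarrow> real" where
  "in_deg E w S v = (\<Sum>u\<in>{u\<in>S. (u,v)\<in>E}. w (u,v))"

definition color_class :: "'a set \<Rightarrow> ('a \<Rightarrow> nat) \<Rightarrow> 'a \<Rightarrow> 'a set" where
  "color_class V c v = {u\<in>V. c u = c v}"

definition weighted_improper_coloring ::
  "'a set \<Rightarrow> ('a \<times> 'a) set \<Rightarrow> ('a \<times> 'a \<Rightarrow> real) \<Rightarrow> nat \<Rightarrow> ('a \<Rightarrow> nat) \<Rightarrow> bool" where
  "weighted_improper_coloring V E w k c \<longleftrightarrow>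
     (\<forall>v\<in>V. c v \<in> {1..k}) \<and> (\<forall>v\<in>V. in_deg E w (color_class V c v) v < 1)"

definition chi_w :: "'a set \<Rightarrow> ('a \<times> 'a) set \<Rightarrow> ('a \<times> 'a \<Rightarrow> real) \<Rightarrow> nat" where
  "chi_w V E w = (LEAST k. \<exists>c. weighted_improper_coloring V E w k c)"

end

theory Submission
  imports Defs "HOL-Library.FuncSet"
begin

text \<open>Let \<open>s = \<lfloor>\<surd>(2W)\<rfloor>\<close>. Since the total (in plus out) weighted degrees sum to \<open>2W < (s+1)\<^sup>2\<close>,
  at most \<open>s\<close> vertices have total degree \<open>\<ge> s+1\<close>; each of them gets a private colour.
  The remaining vertices are coloured with \<open>s+1\<close> colours by a colouring minimising the total
  weight of monochromatic arcs: if some vertex \<open>v\<close> had in-degree \<open>\<ge> 1\<close> inside its class, then by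
  minimality every colour would see weight \<open>\<ge> 1\<close> at \<open>v\<close>, so the total degree of \<open>v\<close> would be
  at least \<open>s+1\<close>.\<close>

definition total_deg :: "('a \<times> 'a) set \<Rightarrow> ('a \<times> 'a \<Rightarrow> real) \<Rightarrow> 'a \<Rightarrow> real" where
  "total_deg E w v = (\<Sum>e\<in>{e\<in>E. fst e = v \<or> snd e = v}. w e)"

definition monochromatic_weight ::
  "'a set \<Rightarrow> ('a \<times> 'a) set \<Rightarrow> ('a \<times> 'a \<Rightarrow> real) \<Rightarrow> ('a \<Rightarrow> nat) \<Rightarrow> real" where
  "monochromatic_weight V E w c = (\<Sum>e\<in>E \<inter> V \<times> V. if c (fst e) = c (snd e) then w e else 0)"

definition other_end :: "'a \<Rightarrow> 'a \<times> 'a \<Rightarrow> 'a" where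
  "other_end v e = (if fst e = v then snd e else fst e)"

definition colour_weight ::
  "'a set \<Rightarrow> ('a \<times> 'a) set \<Rightarrow> ('a \<times> 'a \<Rightarrow> real) \<Rightarrow> ('a \<Rightarrow> nat) \<Rightarrow> 'a \<Rightarrow> nat \<Rightarrow> real" where
  "colour_weight V E w c v j =
     (\<Sum>e\<in>E \<inter> V \<times> V. if (fst e = v \<or> snd e = v) \<and> c (other_end v e) = j then w e else 0)"

lemma total_deg_nonneg: "\<forall>e\<in>E. 0 \<le> w e \<Longrightarrow> 0 \<le> total_deg E w v"
  unfolding total_deg_def by (auto intro: sum_nonneg)

lemma sum_total_deg_le:
  assumes "finite V" "E \<subseteq> V \<times> V" "\<forall>e\<in>E. 0 \<le> w e"
  shows "(\<Sum>v\<in>V. total_deg E w v) \<le> 2 * (\<Sum>e\<in>E. w e)"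
proof -
  have fE: "finite E" using assms finite_subset by blast
  have "(\<Sum>v\<in>V. total_deg E w v) = (\<Sum>v\<in>V. \<Sum>e\<in>E. if fst e = v \<or> snd e = v then w e else 0)"
    unfolding total_deg_def by (simp add: sum.inter_filter[OF fE])
  also have "\<dots> = (\<Sum>e\<in>E. real (card {v\<in>V. fst e = v \<or> snd e = v}) * w e)"
    by (subst sum.swap) (simp add: sum.inter_filter[OF \<open>finite V\<close>, symmetric])
  also have "\<dots> \<le> (\<Sum>e\<in>E. 2 * w e)"
  proof (rule sum_mono)
    fix e assume "e \<in> E"
    have "card {v\<in>V. fst e = v \<or> snd e = v} \<le> card {fst e, snd e}"
      by (rule card_mono) auto
    also have "\<dots> \<le> 2" by (simp add: card_insert_le_m1)
    finally show "real (card {v\<in>V. fst e = v \<or> snd e = v}) * w e \<le> 2 * w e"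
      using assms(3) \<open>e \<in> E\<close> by (simp add: mult_right_mono)
  qed
  finally show ?thesis by (simp add: sum_distrib_left)
qed

lemma card_high_total_deg_le:
  assumes "finite V" "E \<subseteq> V \<times> V" "\<forall>e\<in>E. 0 \<le> w e"
  shows "real (card {v\<in>V. d \<le> total_deg E w v}) * d \<le> 2 * (\<Sum>e\<in>E. w e)"
proof -
  let ?H = "{v\<in>V. d \<le> total_deg E w v}"
  have "real (card ?H) * d \<le> (\<Sum>v\<in>?H. total_deg E w v)"
    using sum_mono[of ?H "\<lambda>_. d" "total_deg E w"] by simp
  also have "\<dots> \<le> (\<Sum>v\<in>V. total_deg E w v)"
    by (rule sum_mono2) (use assms total_deg_nonneg in auto)
  also have "\<dots> \<le> 2 * (\<Sum>e\<in>E. w e)" by (rule sum_total_deg_le[OF assms])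
  finally show ?thesis .
qed

lemma monochromatic_weight_update:
  assumes "\<forall>(u,v)\<in>E. u \<noteq> v"
  shows "monochromatic_weight V E w (c(v := j)) - monochromatic_weight V E w c
           = colour_weight V E w c v j - colour_weight V E w c v (c v)"
proof -
  have "(if (c(v:=j)) (fst e) = (c(v:=j)) (snd e) then w e else 0)
          - (if c (fst e) = c (snd e) then w e else 0)
        = (if (fst e = v \<or> snd e = v) \<and> c (other_end v e) = j then w e else 0)
          - (if (fst e = v \<or> snd e = v) \<and> c (other_end v e) = c v then w e else 0)"
    if "e \<in> E" for e
    using assms that by (auto simp: other_end_def)
  then show ?thesis
    unfolding monochromatic_weight_def colour_weight_def sum_subtractf[symmetric]
    by (intro sum.cong refl) auto
qed

lemma sum_colour_weight_le_total_deg: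
  assumes "finite E" "\<forall>e\<in>E. 0 \<le> w e" "\<forall>u\<in>V. c u \<in> {1..m}"
  shows "(\<Sum>j\<in>{1..m}. colour_weight V E w c v j) \<le> total_deg E w v"
proof -
  have "(\<Sum>j\<in>{1..m}. colour_weight V E w c v j)
          = (\<Sum>e\<in>E \<inter> V \<times> V. if fst e = v \<or> snd e = v then w e else 0)"
    unfolding colour_weight_def
  proof (subst sum.swap, rule sum.cong[OF refl])
    fix e assume "e \<in> E \<inter> V \<times> V"
    then have "c (other_end v e) \<in> {1..m}" using assms(3) by (auto simp: other_end_def)
    then show "(\<Sum>j\<in>{1..m}. if (fst e = v \<or> snd e = v) \<and> c (other_end v e) = j then w e else 0)
                 = (if fst e = v \<or> snd e = v then w e else 0)"
      by (simp add: if_distrib[of "\<lambda>b. if b then _ else _"] sum.delta')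
  qed
  also have "\<dots> = (\<Sum>e\<in>{e\<in>E \<inter> V \<times> V. fst e = v \<or> snd e = v}. w e)"
    by (subst sum.inter_filter) (use assms(1) in auto)
  also have "\<dots> \<le> total_deg E w v"
    unfolding total_deg_def by (rule sum_mono2) (use assms in auto)
  finally show ?thesis .
qed

lemma in_deg_color_class_le_colour_weight:
  assumes "finite E" "\<forall>(u,v)\<in>E. u \<noteq> v" "\<forall>e\<in>E. 0 \<le> w e" "v \<in> V"
  shows "in_deg E w (color_class V c v) v \<le> colour_weight V E w c v (c v)"
proof -
  let ?S = "{u\<in>color_class V c v. (u,v) \<in> E}"
  have "in_deg E w (color_class V c v) v = (\<Sum>e\<in>(\<lambda>u. (u,v)) ` ?S. w e)"
    unfolding in_deg_def by (simp add: sum.reindex inj_on_def)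
  also have "\<dots> = (\<Sum>e\<in>(\<lambda>u. (u,v)) ` ?S.
                     if (fst e = v \<or> snd e = v) \<and> c (other_end v e) = c v then w e else 0)"
    using assms(2) by (intro sum.cong) (auto simp: other_end_def color_class_def)
  also have "\<dots> \<le> colour_weight V E w c v (c v)"
    unfolding colour_weight_def
    by (rule sum_mono2) (use assms in \<open>auto simp: color_class_def\<close>)
  finally show ?thesis .
qed

lemma improper_coloring_if_total_deg_less:
  assumes "finite V" "finite E" "\<forall>(u,v)\<in>E. u \<noteq> v" "\<forall>e\<in>E. 0 \<le> w e"
    and "m \<ge> 1" and low: "\<forall>v\<in>V. total_deg E w v < m"
  shows "\<exists>c. weighted_improper_coloring V E w m c"
proof -
  let ?C = "V \<rightarrow>\<^sub>E {1..m}"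
  have "finite ?C" "?C \<noteq> {}"
    using assms by (auto simp: finite_PiE PiE_eq_empty_iff)
  then obtain c where "is_arg_min (monochromatic_weight V E w) (\<lambda>c. c \<in> ?C) c"
    using ex_is_arg_min_if_finite by blast
  then have "c \<in> ?C" and minimal: "\<And>d. d \<in> ?C \<Longrightarrow> monochromatic_weight V E w c
                                                   \<le> monochromatic_weight V E w d"
    by (auto simp: is_arg_min_linorder)
  then have colours: "\<forall>v\<in>V. c v \<in> {1..m}" by auto
  have "in_deg E w (color_class V c v) v < 1" if "v \<in> V" for v
  proof -
    let ?B = "colour_weight V E w c v"
    have "?B (c v) \<le> ?B j" if "j \<in> {1..m}" for j
    proof -
      have "c(v := j) \<in> ?C"
        using \<open>c \<in> ?C\<close> \<open>v \<in> V\<close> that by (auto simp: PiE_iff extensional_def)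
      then have "monochromatic_weight V E w c \<le> monochromatic_weight V E w (c(v := j))"
        by (rule minimal)
      then show ?thesis
        using monochromatic_weight_update[OF assms(3), of V w c v j] by linarith
    qed
    then have "real m * ?B (c v) \<le> (\<Sum>j\<in>{1..m}. ?B j)"
      using sum_mono[of "{1..m}" "\<lambda>_. ?B (c v)" ?B] by simp
    also have "\<dots> \<le> total_deg E w v"
      by (rule sum_colour_weight_le_total_deg) (use assms colours in auto)
    also have "\<dots> < m" using low \<open>v \<in> V\<close> by blast
    finally have "?B (c v) < 1" using \<open>m \<ge> 1\<close> by simp
    then show ?thesis
      using in_deg_color_class_le_colour_weight[OF assms(2-4) \<open>v \<in> V\<close>, of c] by simp
  qed
  then show ?thesis using colours unfolding weighted_improper_coloring_def by blast
qed

lemma improper_coloring_add_singleton_classes: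
  assumes "finite H" "\<forall>(u,v)\<in>E. u \<noteq> v"
    and "weighted_improper_coloring (V - H) E w k c"
  shows "\<exists>c'. weighted_improper_coloring V E w (card H + k) c'"
proof -
  obtain f where "bij_betw f H {0..<card H}"
    using ex_bij_betw_finite_nat[OF \<open>finite H\<close>] by blast
  then have f_inj: "inj_on f H" and f_less: "\<And>v. v \<in> H \<Longrightarrow> f v < card H"
    by (auto simp: bij_betw_def)
  have c_range: "\<And>v. v \<in> V - H \<Longrightarrow> c v \<in> {1..k}"
   and c_good: "\<And>v. v \<in> V - H \<Longrightarrow> in_deg E w (color_class (V - H) c v) v < 1"
    using assms(3) by (auto simp: weighted_improper_coloring_def)
  define c' where "c' v = (if v \<in> H then f v + 1 else c v + card H)" for v
  have c'_H: "c' v \<le> card H" if "v \<in> H" for v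
    using f_less[OF that] that by (simp add: c'_def)
  have c'_not_H: "c' v > card H" if "v \<in> V - H" for v
    using c_range[OF that] that by (auto simp: c'_def)
  have "in_deg E w (color_class V c' v) v < 1" if "v \<in> V" for v
  proof (cases "v \<in> H")
    case True
    have "color_class V c' v \<subseteq> {v}"
      using True f_inj c'_H c'_not_H
      by (fastforce simp: color_class_def c'_def dest: inj_onD)
    then have no_in_arcs: "{u\<in>color_class V c' v. (u,v) \<in> E} = {}" using assms(2) by auto
    show ?thesis unfolding in_deg_def no_in_arcs by simp
  next
    case False
    with that have "color_class V c' v = color_class (V - H) c v"
      using c'_H c'_not_H by (fastforce simp: color_class_def c'_def)
    then show ?thesis using c_good False that by simp
  qed
  moreover have "c' v \<in> {1..card H + k}" if "v \<in> V" for v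
    using that f_less c_range by (fastforce simp: c'_def)
  ultimately show ?thesis unfolding weighted_improper_coloring_def by blast
qed

lemma weighted_improper_coloring_mono:
  "weighted_improper_coloring V E w k c \<Longrightarrow> k \<le> k' \<Longrightarrow> weighted_improper_coloring V E w k' c"
  unfolding weighted_improper_coloring_def by fastforce

lemma chi_w_le: "weighted_improper_coloring V E w k c \<Longrightarrow> chi_w V E w \<le> k"
  unfolding chi_w_def by (rule Least_le) blast

lemma less_Suc_nat_floor_sqrt_squared:
  fixes x :: real
  assumes "0 \<le> x"
  shows "x < (real (nat \<lfloor>sqrt x\<rfloor>) + 1)\<^sup>2"
proof -
  have "sqrt x < real (nat \<lfloor>sqrt x\<rfloor>) + 1" using assms by linarith
  then have "(sqrt x)\<^sup>2 < (real (nat \<lfloor>sqrt x\<rfloor>) + 1)\<^sup>2"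
    by (rule power_strict_mono) (use assms in auto)
  then show ?thesis using assms by simp
qed

theorem theorem3p5:
  fixes V :: "'a set" and E :: "('a \<times> 'a) set" and w :: "'a \<times> 'a \<Rightarrow> real"
  assumes "weighted_digraph V E w"
  shows "chi_w V E w \<le> 2 * nat \<lfloor>sqrt (2 * (\<Sum>e\<in>E. w e))\<rfloor> + 1"
proof -
  have V: "finite V" "E \<subseteq> V \<times> V" "\<forall>(u,v)\<in>E. u \<noteq> v" "\<forall>e\<in>E. 0 \<le> w e"
    using assms unfolding weighted_digraph_def by auto
  then have "finite E" using finite_subset by blast
  define s where "s = nat \<lfloor>sqrt (2 * (\<Sum>e\<in>E. w e))\<rfloor>"
  define H where "H = {v\<in>V. real s + 1 \<le> total_deg E w v}"
  have "real (card H) * (real s + 1) \<le> 2 * (\<Sum>e\<in>E. w e)"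
    unfolding H_def by (rule card_high_total_deg_le[OF V(1,2,4)])
  also have "\<dots> < (real s + 1)\<^sup>2"
    unfolding s_def using V(4) by (intro less_Suc_nat_floor_sqrt_squared) (simp add: sum_nonneg)
  finally have "real (card H) * (real s + 1) < (real s + 1) * (real s + 1)"
    by (simp only: power2_eq_square)
  then have "real (card H) < real s + 1" by (rule mult_right_less_imp_less) simp
  then have "card H \<le> s" by linarith
  have "\<exists>c. weighted_improper_coloring (V - H) E w (s + 1) c"
    by (rule improper_coloring_if_total_deg_less) (use V \<open>finite E\<close> in \<open>auto simp: H_def\<close>)
  then obtain c where "weighted_improper_coloring (V - H) E w (s + 1) c" ..
  moreover have "finite H" using V(1) by (simp add: H_def)
  ultimately obtain c' where "weighted_improper_coloring V E w (card H + (s + 1)) c'"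
    using improper_coloring_add_singleton_classes V(3) by blast
  then have "weighted_improper_coloring V E w (2 * s + 1) c'"
    by (rule weighted_improper_coloring_mono) (use \<open>card H \<le> s\<close> in simp)
  then show ?thesis unfolding s_def by (rule chi_w_le)
qed

end
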